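(* Let $W\subset\operatorname{Sym}(n,\mathbb{R})$ be a non-trivial linear subspace and let $A\in W$ have maximal rank $r\ge3$ in $W$. Then there is $\varepsilon>0$ such that for every $B\in W$ with $\|B-A\|<\varepsilon$ the following holds: if $\partial\Gamma_A$ and $\partial\Gamma_B$ are varieties of dimension $n-1$ and there is no point of $\partial\Gamma_A\cap\partial\Gamma_B$ at which they intersect transversally, then $\Gamma_A\subset\Gamma_B$ or $\Gamma_B\subset\Gamma_A$.
   Context: For $M\in\operatorname{Sym}(n,\mathbb{R})$, $Q_M(z)={}^tzMz$ and $\Gamma_M:=\{z\in\mathbb{R}^n:Q_M(z)\le0\}$. $A$ has maximal rank in $W$ if $\operatorname{rank}A=\max_{M\in W}\operatorname{rank}M$. $\partial\Gamma_M$ is the topological boundary; it is a variety of dimension $n-1$ if there is $z\in\partial\Gamma_M$ with $Mz\ne0$. $\partial\Gamma_A$ and $\partial\Gamma_B$ intersect transversally at $z\in\partial\Gamma_A\cap\partial\Gamma_B$ if $Az$ and $Bz$ are linearly independent. *)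

theory Defs
  imports "HOL-Analysis.Analysis"
begin

definition Sym :: "(real^'n^'n) set" where
  "Sym = {M. transpose M = M}"

definition Qf :: "real^'n^'n \<Rightarrow> real^'n \<Rightarrow> real" where
  "Qf M z = z \<bullet> (M *v z)"

definition Gamma :: "real^'n^'n \<Rightarrow> (real^'n) set" where
  "Gamma M = {z. Qf M z \<le> 0}"

definition max_rank_in :: "real^'n^'n \<Rightarrow> (real^'n^'n) set \<Rightarrow> bool" where
  "max_rank_in A W \<longleftrightarrow> A \<in> W \<and> (\<forall>M\<in>W. rank M \<le> rank A)"

text \<open>The boundary of Gamma_M is a variety of dimension n-1.\<close>
definition bdry_hypersurface :: "real^'n^'n \<Rightarrow> bool" where
  "bdry_hypersurface M \<longleftrightarrow> (\<exists>z\<in>frontier (Gamma M). M *v z \<noteq> 0)"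

definition lin_indep2 :: "real^'n \<Rightarrow> real^'n \<Rightarrow> bool" where
  "lin_indep2 u v \<longleftrightarrow> (\<forall>a b. a *\<^sub>R u + b *\<^sub>R v = 0 \<longrightarrow> a = 0 \<and> b = 0)"

definition transversal_at :: "real^'n^'n \<Rightarrow> real^'n^'n \<Rightarrow> real^'n \<Rightarrow> bool" where
  "transversal_at A B z \<longleftrightarrow> z \<in> frontier (Gamma A) \<and> z \<in> frontier (Gamma B) \<and> lin_indep2 (A *v z) (B *v z)"

end

theory Submission
  imports Defs "HOL-Real_Asymp.Real_Asymp"
begin

(* Since the boundary of Gamma_A is a hypersurface, Q_A is indefinite, so for B close to A
   the forms Q_A and Q_B are negative at a common vector v and positive at a common vector w.
   If neither Gamma_A nor Gamma_B contains the other, restricting both forms to lines through v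
   and through w shows that Q_B takes both signs on the cone Q_A = 0.  Projecting that cone from
   a suitable point z0 of it (which exists because rank A >= 3) gives a quadratic curve on the
   cone along which Q_B is a quartic in the parameter, negative at 0 and positive at infinity.
   At every root, the curve point lies on both boundaries; without transversality it is in the
   kernel of some B - c A, which makes the root a double root.  But a quartic with these signs
   cannot have only double roots. *)

lemma inner_matrix_vector_sym:
  fixes M :: "real^'n^'n"
  assumes "transpose M = M"
  shows "x \<bullet> (M *v y) = y \<bullet> (M *v x)"
  by (metis assms dot_lmul_matrix inner_commute vector_transpose_matrix)

lemma Qf_add_scaleR:
  fixes M :: "real^'n^'n"
  assumes "transpose M = M"
  shows "Qf M (x + t *\<^sub>R y) = Qf M x + 2 * t * (x \<bullet> (M *v y)) + t\<^sup>2 * Qf M y"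
  using inner_matrix_vector_sym[OF assms, of y x]
  by (simp add: Qf_def matrix_vector_right_distrib matrix_vector_mult_scaleR inner_add_left
      inner_add_right power2_eq_square algebra_simps)

lemma Qf_add:
  fixes M :: "real^'n^'n"
  assumes "transpose M = M"
  shows "Qf M (x + y) = Qf M x + 2 * (x \<bullet> (M *v y)) + Qf M y"
  using Qf_add_scaleR[OF assms, of x 1 y] by simp

lemma Qf_scaleR: "Qf M (c *\<^sub>R x) = c\<^sup>2 * Qf M x"
  by (simp add: Qf_def matrix_vector_mult_scaleR power2_eq_square)

lemma Qf_uminus_matrix: "Qf (- M) x = - Qf M x"
proof -
  have "(- M) *v x = - (M *v x)"
    using scaleR_matrix_vector_assoc[of "-1" M x] by simp
  then show ?thesis
    by (simp add: Qf_def)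
qed

lemma Qf_diff_scaleR_matrix: "Qf (B - c *\<^sub>R A) x = Qf B x - c * Qf A x"
  by (simp add: Qf_def matrix_vector_mult_diff_rdistrib scaleR_matrix_vector_assoc[symmetric]
      inner_diff_right)

lemma continuous_on_Qf: "continuous_on S (Qf M)"
  unfolding Qf_def[abs_def] by (intro continuous_intros)

lemma continuous_on_Qf_matrix:
  fixes x :: "real^'n"
  shows "continuous_on S (\<lambda>M::real^'n^'n. Qf M x)"
proof -
  have "linear (\<lambda>M::real^'n^'n. Qf M x)"
    by (rule linearI) (auto simp: Qf_def matrix_vector_mult_add_rdistrib inner_add_right
        scaleR_matrix_vector_assoc[symmetric])
  then show ?thesis
    by (simp add: linear_continuous_on linear_conv_bounded_linear)
qed

lemma Qf_eq_0_if_frontier: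
  assumes "z \<in> frontier (Gamma M)"
  shows "Qf M z = 0"
proof -
  have "closed (Gamma M)"
    unfolding Gamma_def by (intro closed_Collect_le continuous_on_Qf continuous_on_const)
  then have "Qf M z \<le> 0"
    using assms by (simp add: frontier_def Gamma_def)
  moreover have "{x. Qf M x < 0} \<subseteq> interior (Gamma M)"
    by (intro interior_maximal open_Collect_less continuous_on_Qf continuous_on_const)
      (auto simp: Gamma_def)
  then have "\<not> Qf M z < 0"
    using assms by (auto simp: frontier_def)
  ultimately show ?thesis
    by linarith
qed

lemma eventually_Qf_along_gradient:
  fixes M :: "real^'n^'n"
  assumes sym: "transpose M = M" and "Qf M z = 0" and "M *v z \<noteq> 0"
  shows "\<forall>\<^sub>F t in at_right 0.
           Qf M (z - t *\<^sub>R (M *v z)) < 0 \<and> 0 < Qf M (z + t *\<^sub>R (M *v z))"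
proof -
  let ?g = "M *v z"
  have g: "0 < 2 * (?g \<bullet> ?g)"
    using assms(3) by simp
  have "((\<lambda>t. t * Qf M ?g) \<longlongrightarrow> 0) (at_right 0)"
    by (auto intro!: tendsto_eq_intros)
  then have small: "\<forall>\<^sub>F t in at_right 0. - (2 * (?g \<bullet> ?g)) < t * Qf M ?g \<and> t * Qf M ?g < 2 * (?g \<bullet> ?g)"
    using g by (intro eventually_conj order_tendstoD) auto
  have line: "Qf M (z + t *\<^sub>R ?g) = t * (2 * (?g \<bullet> ?g) + t * Qf M ?g)" for t
    using Qf_add_scaleR[OF sym, of z t ?g] assms(2) inner_matrix_vector_sym[OF sym, of z ?g]
    by (simp add: power2_eq_square algebra_simps)
  from small eventually_at_right_less[of 0] show ?thesis
  proof eventually_elim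
    case (elim t)
    then show ?case
      using line[of t] line[of "- t"] by (simp add: mult_pos_pos mult_neg_pos)
  qed
qed

lemma frontier_GammaI:
  fixes M :: "real^'n^'n"
  assumes "transpose M = M" and "Qf M z = 0" and "M *v z \<noteq> 0"
  shows "z \<in> frontier (Gamma M)"
proof -
  have "\<forall>\<^sub>F t in at_right 0. z + t *\<^sub>R (M *v z) \<in> - Gamma M"
    using eventually_Qf_along_gradient[OF assms]
    by eventually_elim (auto simp: Gamma_def)
  moreover have "((\<lambda>t. z + t *\<^sub>R (M *v z)) \<longlongrightarrow> z) (at_right 0)"
    by (auto intro!: tendsto_eq_intros)
  ultimately have "z \<in> closure (- Gamma M)"
    by (intro Lim_in_closed_set[of _ "\<lambda>t. z + t *\<^sub>R (M *v z)" "at_right 0"])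
      (auto intro: eventually_mono closure_subset[THEN subsetD])
  moreover have "z \<in> closure (Gamma M)"
    using assms(2) closure_subset by (force simp: Gamma_def)
  ultimately show ?thesis
    by (simp add: frontier_def closure_complement)
qed

lemma Qf_indefinite_if_regular_cone_point:
  fixes M :: "real^'n^'n"
  assumes "transpose M = M" and "Qf M z = 0" and "M *v z \<noteq> 0"
  shows "\<exists>v w. Qf M v < 0 \<and> 0 < Qf M w"
  using eventually_happens[OF eventually_Qf_along_gradient[OF assms]] by auto

lemma bdry_hypersurface_iff:
  fixes M :: "real^'n^'n"
  assumes "transpose M = M"
  shows "bdry_hypersurface M \<longleftrightarrow> (\<exists>z. Qf M z = 0 \<and> M *v z \<noteq> 0)"
  using frontier_GammaI[OF assms] Qf_eq_0_if_frontier
  unfolding bdry_hypersurface_def by blast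

lemma regular_cone_point_in_open:
  fixes A :: "real^'n^'n"
  assumes sym: "transpose A = A" and z: "Qf A z = 0" "A *v z \<noteq> 0"
    and p: "Qf A p = 0" "p \<in> U" and "open U"
  obtains p' where "p' \<in> U" "Qf A p' = 0" "A *v p' \<noteq> 0"
proof (cases "A *v p = 0")
  case False
  with p show thesis
    using that by blast
next
  case True
  have "((\<lambda>u. p + u *\<^sub>R z) \<longlongrightarrow> p) (at_right 0)"
    by (auto intro!: tendsto_eq_intros)
  then have "\<forall>\<^sub>F u in at_right 0. p + u *\<^sub>R z \<in> U"
    using \<open>open U\<close> p(2) by (rule topological_tendstoD)
  then have "\<forall>\<^sub>F u in at_right 0. 0 < u \<and> p + u *\<^sub>R z \<in> U"
    using eventually_at_right_less by (rule eventually_conj[rotated])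
  then obtain u where u: "0 < u" "p + u *\<^sub>R z \<in> U"
    using eventually_happens'[OF trivial_limit_at_right_real] by blast
  have "p \<bullet> (A *v z) = 0"
    using inner_matrix_vector_sym[OF sym, of p z] True by simp
  then have "Qf A (p + u *\<^sub>R z) = 0"
    using Qf_add_scaleR[OF sym, of p u z] p(1) z(1) by simp
  moreover have "A *v (p + u *\<^sub>R z) \<noteq> 0"
    using True z(2) u(1) by (simp add: matrix_vector_right_distrib matrix_vector_mult_scaleR)
  ultimately show thesis
    using that u(2) by blast
qed

section \<open>Comparing the sublevel sets along lines\<close>

lemma roots_of_opposite_sign:
  fixes f :: "real \<Rightarrow> real"
  assumes "continuous_on UNIV f" and "f 0 < 0"
    and "filterlim f at_top at_top" and "filterlim f at_top at_bot"
  obtains t1 t2 where "t1 < 0" "0 < t2" "f t1 = 0" "f t2 = 0"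
proof -
  have "\<forall>\<^sub>F t in at_top. 0 < f t"
    using assms(3) by (simp add: filterlim_at_top_dense)
  then obtain T where T: "0 < T" "0 < f T"
    using eventually_happens'[OF trivial_limit_at_top_linorder
        eventually_conj[OF eventually_gt_at_top]] by blast
  have "\<forall>\<^sub>F t in at_bot. 0 < f t"
    using assms(4) by (simp add: filterlim_at_top_dense)
  moreover have "\<forall>\<^sub>F t in at_bot. t < (0::real)"
    by (auto simp: eventually_at_bot_dense)
  ultimately obtain T' where T': "T' < 0" "0 < f T'"
    using eventually_happens'[OF trivial_limit_at_bot_linorder eventually_conj] by blast
  obtain t2 where "0 \<le> t2" "f t2 = 0"
    using IVT'[of f 0 0 T] T assms(1,2) by (auto intro: continuous_on_subset)
  moreover obtain t1 where "t1 \<le> 0" "f t1 = 0"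
    using IVT2'[of f 0 0 T'] T' assms(1,2) by (auto intro: continuous_on_subset)
  ultimately show thesis
    using that assms(2) by (metis order_le_less)
qed

lemma concave_quadratic_pos_between_roots:
  fixes b0 b1 b2 t1 t2 :: real
  assumes "t1 < 0" "0 < t2" "b2 < 0"
    and "0 \<le> b0 + b1 * t1 + b2 * t1\<^sup>2" "0 \<le> b0 + b1 * t2 + b2 * t2\<^sup>2"
  shows "0 < b0"
proof -
  have "t2 * (b0 + b1 * t1 + b2 * t1\<^sup>2) - t1 * (b0 + b1 * t2 + b2 * t2\<^sup>2)
      = (t2 - t1) * (b0 - b2 * t1 * t2)"
    by (simp add: power2_eq_square algebra_simps)
  moreover have "0 \<le> t2 * (b0 + b1 * t1 + b2 * t1\<^sup>2)" "0 \<le> (- t1) * (b0 + b1 * t2 + b2 * t2\<^sup>2)"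
    using assms by (intro mult_nonneg_nonneg; simp)+
  ultimately have "0 \<le> (t2 - t1) * (b0 - b2 * t1 * t2)"
    by linarith
  then have "0 \<le> b0 - b2 * t1 * t2"
    using assms(1,2) by (simp add: zero_le_mult_iff)
  moreover have "0 < b2 * t1 * t2"
    using assms by (simp add: mult_neg_neg)
  ultimately show ?thesis
    by linarith
qed

text \<open>Restrict both forms to the line through \<open>z\<close> in direction \<open>v\<close>: \<open>Q\<^sub>A\<close> vanishes at
  parameters of both signs, where \<open>Q\<^sub>B \<ge> 0\<close>, and \<open>Q\<^sub>B\<close> is concave along the line.\<close>

lemma Qf_pos_if_nonneg_on_cone:
  fixes A B :: "real^'n^'n"
  assumes sA: "transpose A = A" and sB: "transpose B = B"
    and v: "Qf A v < 0" "Qf B v < 0" and cone: "\<And>x. Qf A x = 0 \<Longrightarrow> 0 \<le> Qf B x"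
    and z: "0 < Qf A z"
  shows "0 < Qf B z"
proof -
  define a where "a t = Qf A z + 2 * (z \<bullet> (A *v v)) * t + Qf A v * t\<^sup>2" for t
  have "continuous_on UNIV (\<lambda>t. - a t)"
    unfolding a_def by (intro continuous_intros)
  moreover have "- a 0 < 0"
    using z by (simp add: a_def)
  moreover have "filterlim (\<lambda>t. - a t) at_top at_top" "filterlim (\<lambda>t. - a t) at_top at_bot"
    using v(1) unfolding a_def by real_asymp+
  ultimately obtain t1 t2 where "t1 < 0" "0 < t2" "a t1 = 0" "a t2 = 0"
    by (rule roots_of_opposite_sign) simp_all
  moreover have "0 \<le> Qf B z + 2 * (z \<bullet> (B *v v)) * t + Qf B v * t\<^sup>2" if "a t = 0" for t
    using that cone[of "z + t *\<^sub>R v"] Qf_add_scaleR[OF sA, of z t v] Qf_add_scaleR[OF sB, of z t v]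
    by (simp add: a_def algebra_simps)
  ultimately show ?thesis
    using concave_quadratic_pos_between_roots v(2) by blast
qed

lemma Gamma_subset_if_Qf_nonneg_on_cone:
  fixes A B :: "real^'n^'n"
  assumes "transpose A = A" "transpose B = B"
    and "Qf A v < 0" "Qf B v < 0" "\<And>x. Qf A x = 0 \<Longrightarrow> 0 \<le> Qf B x"
  shows "Gamma B \<subseteq> Gamma A"
  using Qf_pos_if_nonneg_on_cone[OF assms] by (fastforce simp: Gamma_def not_le[symmetric])

lemma Gamma_subset_if_Qf_nonpos_on_cone:
  fixes A B :: "real^'n^'n"
  assumes sA: "transpose A = A" and sB: "transpose B = B"
    and w: "0 < Qf A w" "0 < Qf B w" and cone: "\<And>x. Qf A x = 0 \<Longrightarrow> Qf B x \<le> 0"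
  shows "Gamma A \<subseteq> Gamma B"
proof
  fix z
  assume "z \<in> Gamma A"
  show "z \<in> Gamma B"
  proof (cases "Qf A z = 0")
    case True
    then show ?thesis
      using cone by (simp add: Gamma_def)
  next
    case False
    with \<open>z \<in> Gamma A\<close> have "0 < Qf (- A) z"
      by (simp add: Gamma_def Qf_uminus_matrix)
    moreover have "transpose (- A) = - A" "transpose (- B) = - B"
      using sA sB by (simp_all add: transpose_def vec_eq_iff)
    ultimately have "0 < Qf (- B) z"
      using Qf_pos_if_nonneg_on_cone[of "- A" "- B" w z] w cone by (simp add: Qf_uminus_matrix)
    then show ?thesis
      by (simp add: Gamma_def Qf_uminus_matrix)
  qed
qed

lemma cone_points_of_both_signs:
  fixes A B :: "real^'n^'n"
  assumes "transpose A = A" "transpose B = B"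
    and "Qf A v < 0" "Qf B v < 0" "0 < Qf A w" "0 < Qf B w"
    and "\<not> Gamma A \<subseteq> Gamma B" "\<not> Gamma B \<subseteq> Gamma A"
  obtains p q where "Qf A p = 0" "Qf B p < 0" "Qf A q = 0" "0 < Qf B q"
  using Gamma_subset_if_Qf_nonneg_on_cone[OF assms(1-4)]
    Gamma_subset_if_Qf_nonpos_on_cone[OF assms(1,2,5,6)] assms(7,8)
  by (meson not_le)

section \<open>Projecting the cone from one of its points\<close>

text \<open>For \<open>z\<close> on the cone \<open>Q\<^sub>A = 0\<close>, the line \<open>z + t h\<close> meets the cone again at
  \<open>t = -2 (A z \<bullet> h) / Q\<^sub>A(h)\<close>; \<open>cone_point A z h\<close> is that point scaled by \<open>-Q\<^sub>A(h)\<close>, which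
  keeps it polynomial in \<open>h\<close>.\<close>

definition cone_point :: "real^'n^'n \<Rightarrow> real^'n \<Rightarrow> real^'n \<Rightarrow> real^'n" where
  "cone_point A z h = (2 * ((A *v z) \<bullet> h)) *\<^sub>R h - Qf A h *\<^sub>R z"

lemma inner_cone_point:
  "cone_point A z h \<bullet> k = 2 * ((A *v z) \<bullet> h) * (h \<bullet> k) - Qf A h * (z \<bullet> k)"
  by (simp add: cone_point_def inner_diff_left)

lemma Qf_cone_point:
  fixes A :: "real^'n^'n"
  assumes sym: "transpose A = A" and "Qf A z = 0"
  shows "Qf A (cone_point A z h) = 0"
proof -
  let ?\<beta> = "2 * ((A *v z) \<bullet> h)"
  have "cone_point A z h = ?\<beta> *\<^sub>R h + (- Qf A h) *\<^sub>R z"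
    by (simp add: cone_point_def)
  then have "Qf A (cone_point A z h) = ?\<beta>\<^sup>2 * Qf A h - 2 * Qf A h * ?\<beta> * (h \<bullet> (A *v z))"
    using Qf_add_scaleR[OF sym, of "?\<beta> *\<^sub>R h" "- Qf A h" z] assms(2) by (simp add: Qf_scaleR)
  then show ?thesis
    by (simp add: inner_commute power2_eq_square)
qed

lemma cone_point_on_cone: "Qf A h = 0 \<Longrightarrow> cone_point A z h = (2 * ((A *v z) \<bullet> h)) *\<^sub>R h"
  by (simp add: cone_point_def)

lemma cone_point_add_scaleR:
  fixes A :: "real^'n^'n"
  assumes "transpose A = A"
  shows "cone_point A z (p + t *\<^sub>R q) = cone_point A z p
    + t *\<^sub>R ((2 * ((A *v z) \<bullet> q)) *\<^sub>R p + (2 * ((A *v z) \<bullet> p)) *\<^sub>R q - (2 * (p \<bullet> (A *v q))) *\<^sub>R z)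
    + t\<^sup>2 *\<^sub>R cone_point A z q"
  using Qf_add_scaleR[OF assms, of p t q]
  by (simp add: cone_point_def inner_add_right scaleR_add_right scaleR_add_left power2_eq_square
      algebra_simps)

lemma inner_matrix_vector_cone_point:
  fixes A :: "real^'n^'n"
  assumes sym: "transpose A = A" and "Qf A z = 0"
  shows "(A *v cone_point A z h) \<bullet> z = 2 * ((A *v z) \<bullet> h)\<^sup>2"
proof -
  have "(A *v cone_point A z h) \<bullet> z = cone_point A z h \<bullet> (A *v z)"
    using inner_matrix_vector_sym[OF sym, of z "cone_point A z h"] by (simp only: inner_commute)
  also have "\<dots> = 2 * ((A *v z) \<bullet> h)\<^sup>2"
    using assms(2) by (simp add: inner_cone_point Qf_def power2_eq_square inner_commute[of h])
  finally show ?thesis .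
qed

lemma matrix_vector_cone_point_neq_0:
  fixes A :: "real^'n^'n"
  assumes sym: "transpose A = A" and "Qf A z = 0" "A *v z \<noteq> 0" "cone_point A z h \<noteq> 0"
  shows "A *v cone_point A z h \<noteq> 0"
proof (cases "(A *v z) \<bullet> h = 0")
  case True
  have "A *v cone_point A z h = (2 * ((A *v z) \<bullet> h)) *\<^sub>R (A *v h) - Qf A h *\<^sub>R (A *v z)"
    by (simp add: cone_point_def matrix_vector_mult_diff_distrib matrix_vector_mult_scaleR)
  then show ?thesis
    using True assms(3,4) by (simp add: cone_point_def)
next
  case False
  then show ?thesis
    using inner_matrix_vector_cone_point[OF sym assms(2), of h] by auto
qed

lemma rank_le_2_if_Qf_eq_product:
  fixes A :: "real^'n^'n"
  assumes sym: "transpose A = A" and "a \<noteq> 0" "b \<noteq> 0"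
    and prod: "\<And>h. c * Qf A h = 2 * (a \<bullet> h) * (b \<bullet> h)"
  shows "rank A \<le> 2"
proof -
  have polar: "c * (x \<bullet> (A *v y)) = (a \<bullet> x) * (b \<bullet> y) + (a \<bullet> y) * (b \<bullet> x)" for x y
    using prod[of "x + y"] prod[of x] prod[of y] Qf_add[OF sym, of x y]
    by (simp add: inner_add_right algebra_simps)
  have "c \<noteq> 0"
  proof
    assume "c = 0"
    then have "(a \<bullet> a) * (b \<bullet> b) + (a \<bullet> b)\<^sup>2 = 0"
      using polar[of a b] by (simp add: inner_commute power2_eq_square)
    moreover have "0 < (a \<bullet> a) * (b \<bullet> b)"
      using assms(2,3) by simp
    ultimately show False
      using zero_le_power2[of "a \<bullet> b"] by linarith
  qed
  have "A *v y \<in> span {a, b}" for y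
  proof -
    have "x \<bullet> (A *v y) = x \<bullet> ((1 / c) *\<^sub>R ((b \<bullet> y) *\<^sub>R a + (a \<bullet> y) *\<^sub>R b))" for x
    proof -
      have "x \<bullet> (A *v y) = ((a \<bullet> x) * (b \<bullet> y) + (a \<bullet> y) * (b \<bullet> x)) / c"
        using polar[of x y] \<open>c \<noteq> 0\<close> by (simp add: eq_divide_eq mult.commute)
      then show ?thesis
        by (simp add: inner_add_right inner_commute[of x a] inner_commute[of x b] add_divide_distrib)
    qed
    then have "A *v y = (1 / c) *\<^sub>R ((b \<bullet> y) *\<^sub>R a + (a \<bullet> y) *\<^sub>R b)"
      using vector_eq_ldot by blast
    then show ?thesis
      by (simp add: span_add span_base span_scale)
  qed
  then have "dim (range ((*v) A)) \<le> card {a, b}"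
    by (intro dim_le_card) auto
  also have "\<dots> \<le> 2"
    by (simp add: card_insert_if)
  finally show ?thesis
    by (simp add: rank_dim_range)
qed

text \<open>Otherwise testing \<open>z = cone_point A p h\<close> gives
  \<open>(p \<bullet> A q) Q\<^sub>A(h) = 2 (A p \<bullet> h) (A q \<bullet> h)\<close> off the hyperplane \<open>A p \<bullet> h = 0\<close>, hence
  everywhere by continuity, which forces \<open>rank A \<le> 2\<close>.\<close>

lemma exists_cone_point_pairing_nonzero:
  fixes A :: "real^'n^'n"
  assumes sym: "transpose A = A" and "3 \<le> rank A"
    and p: "Qf A p = 0" "A *v p \<noteq> 0" and q: "A *v q \<noteq> 0"
  shows "\<exists>z. Qf A z = 0 \<and> (A *v z) \<bullet> p \<noteq> 0 \<and> (A *v z) \<bullet> q \<noteq> 0"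
proof (rule ccontr)
  assume none: "\<not> ?thesis"
  define c where "c = p \<bullet> (A *v q)"
  define F where "F h = c * Qf A h - 2 * ((A *v p) \<bullet> h) * ((A *v q) \<bullet> h)" for h
  have F0: "F h = 0" if "h \<in> - {h. (A *v p) \<bullet> h = 0}" for h
  proof -
    let ?z = "cone_point A p h"
    have "(A *v ?z) \<bullet> p \<noteq> 0"
      using inner_matrix_vector_cone_point[OF sym p(1), of h] that by simp
    moreover have "(A *v ?z) \<bullet> q = ?z \<bullet> (A *v q)"
      using inner_matrix_vector_sym[OF sym, of q ?z] by (simp only: inner_commute[of "A *v ?z"])
    then have "(A *v ?z) \<bullet> q = - F h"
      by (simp add: inner_cone_point F_def c_def inner_commute[of h])
    ultimately have "F h \<noteq> 0 \<Longrightarrow> Qf A ?z = 0 \<and> (A *v ?z) \<bullet> p \<noteq> 0 \<and> (A *v ?z) \<bullet> q \<noteq> 0"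
      using Qf_cone_point[OF sym p(1), of h] by simp
    then show ?thesis
      using none by blast
  qed
  have "closure (- {h. (A *v p) \<bullet> h = 0}) = UNIV"
    using p(2) by (simp add: closure_complement)
  moreover have "continuous_on UNIV F"
    unfolding F_def by (intro continuous_intros continuous_on_Qf)
  ultimately have "F h = 0" for h
    using continuous_constant_on_closure[of "- {h. (A *v p) \<bullet> h = 0}" F 0 h] F0 by simp
  then have "rank A \<le> 2"
    by (intro rank_le_2_if_Qf_eq_product[OF sym p(2) q, of c]) (simp add: F_def)
  then show False
    using assms(2) by simp
qed

section \<open>A quartic along the projected cone\<close>

lemma factor_of_two_double_roots:
  fixes f :: "real \<Rightarrow> real"
  assumes r: "f = (\<lambda>t. (t - t1)\<^sup>2 * (r0 + r1 * t + r2 * t\<^sup>2))"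
    and s: "f = (\<lambda>t. (t - t2)\<^sup>2 * (s0 + s1 * t + s2 * t\<^sup>2))" and "t1 \<noteq> t2"
  shows "f t = r2 * ((t - t1) * (t - t2))\<^sup>2"
proof -
  have root: "r0 + r1 * t2 + r2 * t2\<^sup>2 = 0"
    using fun_cong[OF r, of t2] fun_cong[OF s, of t2] \<open>t1 \<noteq> t2\<close> by simp
  have "(f has_real_derivative
      2 * (t2 - t1) * (r0 + r1 * t2 + r2 * t2\<^sup>2) + (t2 - t1)\<^sup>2 * (r1 + 2 * r2 * t2)) (at t2)"
    unfolding r by (auto intro!: derivative_eq_intros simp: power2_eq_square algebra_simps)
  then have "(f has_real_derivative (t2 - t1)\<^sup>2 * (r1 + 2 * r2 * t2)) (at t2)"
    by (simp add: root)
  moreover have "(f has_real_derivative 0) (at t2)"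
    unfolding s by (auto intro!: derivative_eq_intros)
  ultimately have "(t2 - t1)\<^sup>2 * (r1 + 2 * r2 * t2) = 0"
    by (rule DERIV_unique)
  then have "r1 = - 2 * r2 * t2"
    using \<open>t1 \<noteq> t2\<close> by simp
  with root show ?thesis
    by (simp add: r power2_eq_square algebra_simps)
qed

lemma quartic_has_non_double_root:
  fixes f :: "real \<Rightarrow> real"
  assumes f: "\<And>t. f t = c0 + c1 * t + c2 * t\<^sup>2 + c3 * t ^ 3 + c4 * t ^ 4"
    and "c0 < 0" and "0 < c4"
  shows "\<exists>s. f s = 0 \<and> \<not> (\<exists>r0 r1 r2. \<forall>t. f t = (t - s)\<^sup>2 * (r0 + r1 * t + r2 * t\<^sup>2))"
proof (rule ccontr)
  assume "\<not> ?thesis"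
  then have double: "\<exists>r0 r1 r2. f = (\<lambda>t. (t - s)\<^sup>2 * (r0 + r1 * t + r2 * t\<^sup>2))" if "f s = 0" for s
    using that by blast
  have f_poly: "f = (\<lambda>t. c0 + c1 * t + c2 * t\<^sup>2 + c3 * t ^ 3 + c4 * t ^ 4)"
    using f by blast
  have "continuous_on UNIV f"
    unfolding f_poly by (intro continuous_intros)
  moreover have "f 0 < 0"
    using assms(2) by (simp add: f)
  moreover have lim: "filterlim f at_top at_top" "filterlim f at_top at_bot"
    using assms(3) unfolding f_poly by real_asymp+
  ultimately obtain t1 t2 where t12: "t1 < 0" "0 < t2" "f t1 = 0" "f t2 = 0"
    by (rule roots_of_opposite_sign)
  obtain r0 r1 r2 where r: "f = (\<lambda>t. (t - t1)\<^sup>2 * (r0 + r1 * t + r2 * t\<^sup>2))"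
    using double[OF t12(3)] by blast
  obtain s0 s1 s2 where s: "f = (\<lambda>t. (t - t2)\<^sup>2 * (s0 + s1 * t + s2 * t\<^sup>2))"
    using double[OF t12(4)] by blast
  have f_factor: "f t = r2 * ((t - t1) * (t - t2))\<^sup>2" for t
    using factor_of_two_double_roots[OF r s] t12(1,2) by simp
  with \<open>f 0 < 0\<close> have "r2 < 0"
    by (simp add: mult_less_0_iff)
  then have "f t \<le> 0" for t
    by (simp add: f_factor mult_nonpos_nonneg)
  moreover have "\<forall>\<^sub>F t in at_top. 0 < f t"
    using lim(1) by (simp add: filterlim_at_top_dense)
  ultimately show False
    using eventually_happens'[OF trivial_limit_at_top_linorder] by (meson not_le)
qed

lemma Qf_quadratic_curve:
  fixes M :: "real^'n^'n"
  assumes sym: "transpose M = M"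
  shows "Qf M (x + t *\<^sub>R y + t\<^sup>2 *\<^sub>R z) = Qf M x + 2 * (x \<bullet> (M *v y)) * t
    + (Qf M y + 2 * (x \<bullet> (M *v z))) * t\<^sup>2 + 2 * (y \<bullet> (M *v z)) * t ^ 3 + Qf M z * t ^ 4"
  using Qf_add_scaleR[OF sym, of "x + t *\<^sub>R y" "t\<^sup>2" z] Qf_add_scaleR[OF sym, of x t y]
  by (simp add: inner_add_left power2_eq_square power3_eq_cube power4_eq_xxxx algebra_simps)

lemma Qf_quadratic_curve_double_root:
  fixes D :: "real^'n^'n"
  assumes sym: "transpose D = D" and \<gamma>: "\<And>t. \<gamma> t = w0 + t *\<^sub>R w1 + t\<^sup>2 *\<^sub>R w2"
    and ker: "D *v \<gamma> s = 0"
  shows "\<exists>r0 r1 r2. \<forall>t. Qf D (\<gamma> t) = (t - s)\<^sup>2 * (r0 + r1 * t + r2 * t\<^sup>2)"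
proof -
  let ?ws = "w0 + s *\<^sub>R w1 + s\<^sup>2 *\<^sub>R w2"
  have "Qf D (\<gamma> t) = (t - s)\<^sup>2 * (Qf D w1 + 2 * (s + t) * (w1 \<bullet> (D *v w2))
      + (s + t)\<^sup>2 * Qf D w2)" for t
  proof -
    have curve: "\<gamma> t = ?ws + (t - s) *\<^sub>R (w1 + (s + t) *\<^sub>R w2)"
      by (simp add: \<gamma> power2_eq_square algebra_simps)
    have "?ws \<bullet> (D *v v) = 0" for v
      using inner_matrix_vector_sym[OF sym, of ?ws v] ker by (simp add: \<gamma>)
    then show ?thesis
      unfolding curve Qf_add_scaleR[OF sym, of ?ws "t - s" "w1 + (s + t) *\<^sub>R w2"]
        Qf_add_scaleR[OF sym, of w1 "s + t" w2] Qf_def[of D ?ws]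
      by simp
  qed
  then show ?thesis
    by (intro exI[of _ "Qf D w1 + 2 * s * (w1 \<bullet> (D *v w2)) + s\<^sup>2 * Qf D w2"]
        exI[of _ "2 * (w1 \<bullet> (D *v w2)) + 2 * s * Qf D w2"] exI[of _ "Qf D w2"])
      (simp add: power2_eq_square algebra_simps)
qed

lemma Qf_along_cone_curve:
  fixes A B :: "real^'n^'n"
  assumes sA: "transpose A = A" and sB: "transpose B = B" and "Qf A p = 0" "Qf A q = 0"
  shows "\<exists>c1 c2 c3. \<forall>t. Qf B (cone_point A z (p + t *\<^sub>R q)) = (2 * ((A *v z) \<bullet> p))\<^sup>2 * Qf B p
    + c1 * t + c2 * t\<^sup>2 + c3 * t ^ 3 + (2 * ((A *v z) \<bullet> q))\<^sup>2 * Qf B q * t ^ 4"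
proof -
  let ?w0 = "cone_point A z p" and ?w2 = "cone_point A z q"
  obtain w1 where "cone_point A z (p + t *\<^sub>R q) = ?w0 + t *\<^sub>R w1 + t\<^sup>2 *\<^sub>R ?w2" for t
    using cone_point_add_scaleR[OF sA] by blast
  then have "Qf B (cone_point A z (p + t *\<^sub>R q)) = Qf B ?w0 + 2 * (?w0 \<bullet> (B *v w1)) * t
    + (Qf B w1 + 2 * (?w0 \<bullet> (B *v ?w2))) * t\<^sup>2 + 2 * (w1 \<bullet> (B *v ?w2)) * t ^ 3 + Qf B ?w2 * t ^ 4"
    for t
    by (simp only: Qf_quadratic_curve[OF sB])
  moreover have "Qf B ?w0 = (2 * ((A *v z) \<bullet> p))\<^sup>2 * Qf B p" "Qf B ?w2 = (2 * ((A *v z) \<bullet> q))\<^sup>2 * Qf B q"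
    using assms(3,4) by (simp_all add: cone_point_on_cone Qf_scaleR)
  ultimately show ?thesis
    by (intro exI allI) (simp only:)
qed

lemma pencil_kernel_if_not_transversal:
  fixes A B :: "real^'n^'n"
  assumes sA: "transpose A = A" and sB: "transpose B = B"
    and "\<not> transversal_at A B x" "Qf A x = 0" "Qf B x = 0" "A *v x \<noteq> 0"
  obtains c where "(B - c *\<^sub>R A) *v x = 0"
proof (cases "B *v x = 0")
  case True
  then show thesis
    using that[of 0] by simp
next
  case False
  then have "x \<in> frontier (Gamma A)" "x \<in> frontier (Gamma B)"
    using frontier_GammaI[OF sA] frontier_GammaI[OF sB] assms(4-6) by blast+
  with assms(3) obtain a b where ab: "a *\<^sub>R (A *v x) + b *\<^sub>R (B *v x) = 0" "a \<noteq> 0 \<or> b \<noteq> 0"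
    by (auto simp: transversal_at_def lin_indep2_def)
  then have "b \<noteq> 0"
    using assms(6) by auto
  then have "(B - (- a / b) *\<^sub>R A) *v x = (1 / b) *\<^sub>R (a *\<^sub>R (A *v x) + b *\<^sub>R (B *v x))"
    by (simp add: matrix_vector_mult_diff_rdistrib scaleR_matrix_vector_assoc[symmetric]
        algebra_simps)
  then show thesis
    using that[of "- a / b"] ab(1) by simp
qed

lemma double_roots_along_cone_curve:
  fixes A B :: "real^'n^'n"
  assumes sA: "transpose A = A" and sB: "transpose B = B"
    and no_transversal: "\<nexists>x. transversal_at A B x"
    and z: "Qf A z = 0" "A *v z \<noteq> 0" and root: "Qf B (cone_point A z (p + s *\<^sub>R q)) = 0"
  shows "\<exists>r0 r1 r2. \<forall>t. Qf B (cone_point A z (p + t *\<^sub>R q)) = (t - s)\<^sup>2 * (r0 + r1 * t + r2 * t\<^sup>2)"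
proof -
  let ?x = "cone_point A z (p + s *\<^sub>R q)"
  obtain c where ker: "(B - c *\<^sub>R A) *v ?x = 0"
  proof (cases "?x = 0")
    case True
    then show thesis
      using that[of 0] by simp
  next
    case False
    then show thesis
      using pencil_kernel_if_not_transversal[OF sA sB _ Qf_cone_point[OF sA z(1)] root
          matrix_vector_cone_point_neq_0[OF sA z]] no_transversal that by blast
  qed
  have "transpose (B - c *\<^sub>R A) = B - c *\<^sub>R A"
    using sA sB by (simp add: transpose_def vec_eq_iff)
  from Qf_quadratic_curve_double_root[OF this cone_point_add_scaleR[OF sA] ker]
  show ?thesis
    by (simp add: Qf_diff_scaleR_matrix Qf_cone_point[OF sA z(1)])
qed

lemma transversal_point_if_cone_sign_change:
  fixes A B :: "real^'n^'n"
  assumes sA: "transpose A = A" and sB: "transpose B = B" and "3 \<le> rank A"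
    and z: "Qf A z = 0" "A *v z \<noteq> 0"
    and "Qf A p = 0" "Qf B p < 0" and "Qf A q = 0" "0 < Qf B q"
  shows "\<exists>x. transversal_at A B x"
proof (rule ccontr)
  assume no_transversal: "\<nexists>x. transversal_at A B x"
  have "open {x. Qf B x < 0}" "open {x. 0 < Qf B x}"
    by (intro open_Collect_less continuous_on_Qf continuous_on_const)+
  obtain p' where p': "Qf A p' = 0" "A *v p' \<noteq> 0" "Qf B p' < 0"
    using regular_cone_point_in_open[OF sA z \<open>Qf A p = 0\<close> _ \<open>open {x. Qf B x < 0}\<close>]
      \<open>Qf B p < 0\<close> by blast
  obtain q' where q': "Qf A q' = 0" "A *v q' \<noteq> 0" "0 < Qf B q'"
    using regular_cone_point_in_open[OF sA z \<open>Qf A q = 0\<close> _ \<open>open {x. 0 < Qf B x}\<close>]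
      \<open>0 < Qf B q\<close> by blast
  obtain z0 where z0: "Qf A z0 = 0" "(A *v z0) \<bullet> p' \<noteq> 0" "(A *v z0) \<bullet> q' \<noteq> 0"
    using exists_cone_point_pairing_nonzero[OF sA assms(3) p'(1,2) q'(2)] by blast
  then have "A *v z0 \<noteq> 0"
    by auto
  obtain c1 c2 c3 where quartic: "Qf B (cone_point A z0 (p' + t *\<^sub>R q')) = (2 * ((A *v z0) \<bullet> p'))\<^sup>2 * Qf B p'
    + c1 * t + c2 * t\<^sup>2 + c3 * t ^ 3 + (2 * ((A *v z0) \<bullet> q'))\<^sup>2 * Qf B q' * t ^ 4" for t
    using Qf_along_cone_curve[OF sA sB p'(1) q'(1)] by blast
  moreover have "(2 * ((A *v z0) \<bullet> p'))\<^sup>2 * Qf B p' < 0" "0 < (2 * ((A *v z0) \<bullet> q'))\<^sup>2 * Qf B q'"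
    using p'(3) q'(3) z0(2,3) by (simp_all add: mult_pos_neg)
  ultimately obtain s where "Qf B (cone_point A z0 (p' + s *\<^sub>R q')) = 0"
    and "\<nexists>r0 r1 r2. \<forall>t. Qf B (cone_point A z0 (p' + t *\<^sub>R q')) = (t - s)\<^sup>2 * (r0 + r1 * t + r2 * t\<^sup>2)"
    using quartic_has_non_double_root[OF quartic] by blast
  then show False
    using double_roots_along_cone_curve[OF sA sB no_transversal z0(1) \<open>A *v z0 \<noteq> 0\<close>] by blast
qed

lemma Gamma_nested_if_not_transversal:
  fixes A B :: "real^'n^'n"
  assumes sA: "transpose A = A" and sB: "transpose B = B" and "3 \<le> rank A"
    and "Qf A v < 0" "Qf B v < 0" "0 < Qf A w" "0 < Qf B w"
    and "bdry_hypersurface A" and "\<nexists>x. transversal_at A B x"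
  shows "Gamma A \<subseteq> Gamma B \<or> Gamma B \<subseteq> Gamma A"
proof (rule ccontr)
  assume "\<not> ?thesis"
  then obtain p q where "Qf A p = 0" "Qf B p < 0" "Qf A q = 0" "0 < Qf B q"
    using cone_points_of_both_signs[OF sA sB assms(4-7)] by blast
  moreover obtain z where "Qf A z = 0" "A *v z \<noteq> 0"
    using assms(8) bdry_hypersurface_iff[OF sA] by blast
  ultimately show False
    using transversal_point_if_cone_sign_change[OF sA sB assms(3)] assms(9) by blast
qed

theorem corollary2p8:
  fixes W :: "(real^'n^'n) set" and A :: "real^'n^'n"
  assumes "subspace W" and "W \<subseteq> Sym" and "W \<noteq> {0}"
    and "max_rank_in A W" and "rank A \<ge> 3"
  shows "\<exists>\<epsilon>>0. \<forall>B\<in>W. norm (B - A) < \<epsilon> \<longrightarrow>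
           (bdry_hypersurface A \<and> bdry_hypersurface B \<and>
            \<not> (\<exists>z. transversal_at A B z))
           \<longrightarrow> (Gamma A \<subseteq> Gamma B \<or> Gamma B \<subseteq> Gamma A)"
proof -
  have sym: "transpose M = M" if "M \<in> W" for M
    using assms(2) that by (auto simp: Sym_def)
  then have sA: "transpose A = A"
    using assms(4) by (simp add: max_rank_in_def)
  show ?thesis
  proof (cases "\<exists>v w. Qf A v < 0 \<and> 0 < Qf A w")
    case False
    then have "\<not> bdry_hypersurface A"
      using Qf_indefinite_if_regular_cone_point[OF sA] by (auto simp: bdry_hypersurface_iff[OF sA])
    then show ?thesis
      by (intro exI[of _ 1]) simp
  next
    case True
    then obtain v w where "Qf A v < 0" "0 < Qf A w"
      by blast
    moreover have "open {B. Qf B v < 0 \<and> 0 < Qf B w}"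
      by (intro open_Collect_conj open_Collect_less continuous_on_Qf_matrix continuous_on_const)
    ultimately obtain \<epsilon> where "0 < \<epsilon>" and \<epsilon>: "ball A \<epsilon> \<subseteq> {B. Qf B v < 0 \<and> 0 < Qf B w}"
      by (force simp: open_contains_ball)
    show ?thesis
    proof (intro exI[of _ \<epsilon>] conjI ballI impI)
      fix B
      assume "B \<in> W" "norm (B - A) < \<epsilon>"
        and "bdry_hypersurface A \<and> bdry_hypersurface B \<and> \<not> (\<exists>z. transversal_at A B z)"
      moreover from \<epsilon> \<open>norm (B - A) < \<epsilon>\<close> have "Qf B v < 0" "0 < Qf B w"
        by (auto simp: dist_norm norm_minus_commute)
      ultimately show "Gamma A \<subseteq> Gamma B \<or> Gamma B \<subseteq> Gamma A"
        using Gamma_nested_if_not_transversal[OF sA sym assms(5) \<open>Qf A v < 0\<close> _ \<open>0 < Qf A w\<close>]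
        by blast
    qed (use \<open>0 < \<epsilon>\<close> in simp)
  qed
qed

end
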